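(* Let $m,p,n$ be positive integers with $p\mid m$ and $n>1$. If $(T_1,\ldots,T_n)$ is a $\boldsymbol\Theta_n$-contraction, then $(\gamma_1T_1,\ldots,\gamma_{n-1}T_{n-1})$ is a $\Gamma_{n-1}$-contraction, where $\gamma_j=\frac{n-j}{n}$ for $j=1,\ldots,n-1$.
   Context: Put $q=m/p$. $G(m,p,n)$ is the group of $n\times n$ monomial matrices whose nonzero entries are $m$-th roots of unity and whose product of nonzero entries is an $(m/p)$-th root of unity. Let $s_i$ be the $i$-th elementary symmetric polynomial; $\theta_i(z)=s_i(z_1^m,\ldots,z_n^m)$ for $1\le i\le n-1$, $\theta_n(z)=(z_1\cdots z_n)^q$, $\boldsymbol\theta=(\theta_1,\dots,\theta_n)$, $\boldsymbol\Theta_n=\boldsymbol\theta(\mathbb D^n)$, $\overline{\boldsymbol\Theta}_n=\boldsymbol\theta(\overline{\mathbb D}^n)$. A commuting tuple $(T_1,\dots,T_n)$ of bounded operators on a Hilbert space is a $\boldsymbol\Theta_n$-contraction if $\|f(T_1,\dots,T_n)\|\le\sup_{\overline{\boldsymbol\Theta}_n}|f|$ for every polynomial $f\in\mathbb C[z_1,\dots,z_n]$. $\Gamma_k=\boldsymbol s(\overline{\mathbb D}^k)$ is the closed symmetrized polydisc, and a $\Gamma_k$-contraction is a commuting $k$-tuple $S$ with $\|f(S)\|\le\sup_{\Gamma_k}|f|$ for all polynomials $f$ in $k$ variables. *)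

theory Defs
  imports "HOL-Analysis.Analysis"
begin

text \<open>A complex Hilbert space is represented by a real Hilbert space (type class
 real_inner + complete_space) together with a real-linear map J (multiplication by i)
 with J (J x) = - x which is isometric for the real inner product.
 The complex inner product is then inner x y + i * inner x (J y) (up to convention),
 and the norm is the same.\<close>

definition complex_structure :: "('h::real_inner \<Rightarrow> 'h) \<Rightarrow> bool" where
  "complex_structure J \<longleftrightarrow> linear J \<and> (\<forall>x. J (J x) = - x) \<and> (\<forall>x y. inner (J x) (J y) = inner x y)"

definition cscale :: "('h::real_vector \<Rightarrow> 'h) \<Rightarrow> complex \<Rightarrow> 'h \<Rightarrow> 'h" where
  "cscale J c x = Re c *\<^sub>R x + Im c *\<^sub>R J x"

definition bounded_op :: "('h::real_normed_vector \<Rightarrow> 'h) \<Rightarrow> ('h \<Rightarrow> 'h) \<Rightarrow> bool" where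
  "bounded_op J T \<longleftrightarrow> bounded_linear T \<and> T \<circ> J = J \<circ> T"

definition commuting_tuple :: "nat \<Rightarrow> (nat \<Rightarrow> 'h \<Rightarrow> 'h) \<Rightarrow> bool" where
  "commuting_tuple k T \<longleftrightarrow> (\<forall>i<k. \<forall>j<k. T i \<circ> T j = T j \<circ> T i)"

text \<open>A polynomial in the variables z_0, ..., z_(k-1) is given by its coefficient function on
 multi-indices alpha :: nat => nat; finitely many coefficients are nonzero and only
 variables with index < k occur.\<close>
definition mpoly :: "nat \<Rightarrow> ((nat \<Rightarrow> nat) \<Rightarrow> complex) \<Rightarrow> bool" where
  "mpoly k c \<longleftrightarrow> finite {\<alpha>. c \<alpha> \<noteq> 0} \<and> (\<forall>\<alpha>. c \<alpha> \<noteq> 0 \<longrightarrow> (\<forall>i\<ge>k. \<alpha> i = 0))"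

definition mpeval :: "nat \<Rightarrow> ((nat \<Rightarrow> nat) \<Rightarrow> complex) \<Rightarrow> (nat \<Rightarrow> complex) \<Rightarrow> complex" where
  "mpeval k c z = (\<Sum>\<alpha>\<in>{\<alpha>. c \<alpha> \<noteq> 0}. c \<alpha> * (\<Prod>i<k. z i ^ \<alpha> i))"

definition opmono :: "nat \<Rightarrow> (nat \<Rightarrow> 'h \<Rightarrow> 'h) \<Rightarrow> (nat \<Rightarrow> nat) \<Rightarrow> 'h \<Rightarrow> 'h" where
  "opmono k T \<alpha> = foldr (\<lambda>i g. (T i ^^ \<alpha> i) \<circ> g) [0..<k] id"

definition opeval :: "('h::real_vector \<Rightarrow> 'h) \<Rightarrow> nat \<Rightarrow> ((nat \<Rightarrow> nat) \<Rightarrow> complex) \<Rightarrow> (nat \<Rightarrow> 'h \<Rightarrow> 'h) \<Rightarrow> 'h \<Rightarrow> 'h" where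
  "opeval J k c T = (\<lambda>x. \<Sum>\<alpha>\<in>{\<alpha>. c \<alpha> \<noteq> 0}. cscale J (c \<alpha>) (opmono k T \<alpha> x))"

definition esym :: "nat \<Rightarrow> nat \<Rightarrow> (nat \<Rightarrow> complex) \<Rightarrow> complex" where
  "esym k j w = (\<Sum>S\<in>{S. S \<subseteq> {..<k} \<and> card S = j}. \<Prod>i\<in>S. w i)"

definition closed_polydisc :: "nat \<Rightarrow> (nat \<Rightarrow> complex) set" where
  "closed_polydisc k = {z. (\<forall>i<k. cmod (z i) \<le> 1) \<and> (\<forall>i\<ge>k. z i = 0)}"

text \<open>Symmetrization map s = (s_1,...,s_k), coordinates indexed 0..k-1.\<close>
definition symmap :: "nat \<Rightarrow> (nat \<Rightarrow> complex) \<Rightarrow> (nat \<Rightarrow> complex)" where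
  "symmap k z = (\<lambda>i. if i < k then esym k (Suc i) z else 0)"

definition Gamma :: "nat \<Rightarrow> (nat \<Rightarrow> complex) set" where
  "Gamma k = symmap k ` closed_polydisc k"

text \<open>theta = (theta_1,...,theta_n) for G(m,p,n), q = m/p; coordinates indexed 0..n-1:
 theta_(i+1) = s_(i+1)(z^m) for i < n-1, theta_n = (z_1 ... z_n)^q.\<close>
definition thetamap :: "nat \<Rightarrow> nat \<Rightarrow> nat \<Rightarrow> (nat \<Rightarrow> complex) \<Rightarrow> (nat \<Rightarrow> complex)" where
  "thetamap m p n z = (\<lambda>i. if i < n - 1 then esym n (Suc i) (\<lambda>j. z j ^ m)
                          else if i = n - 1 then (\<Prod>j<n. z j) ^ (m div p) else 0)"

definition Theta_closed :: "nat \<Rightarrow> nat \<Rightarrow> nat \<Rightarrow> (nat \<Rightarrow> complex) set" where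
  "Theta_closed m p n = thetamap m p n ` closed_polydisc n"

definition K_contraction :: "('h::{real_inner,complete_space} \<Rightarrow> 'h) \<Rightarrow> (nat \<Rightarrow> complex) set \<Rightarrow> nat \<Rightarrow> (nat \<Rightarrow> 'h \<Rightarrow> 'h) \<Rightarrow> bool" where
  "K_contraction J K k T \<longleftrightarrow> (\<forall>i<k. bounded_op J (T i)) \<and> commuting_tuple k T \<and>
     (\<forall>c. mpoly k c \<longrightarrow> onorm (opeval J k c T) \<le> (SUP z\<in>K. cmod (mpeval k c z)))"

definition Theta_contraction where
  "Theta_contraction J m p n T \<longleftrightarrow> K_contraction J (Theta_closed m p n) n T"

definition Gamma_contraction where
  "Gamma_contraction J k T \<longleftrightarrow> K_contraction J (Gamma k) k T"

end

theory Submission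
  imports Defs "HOL-Computational_Algebra.Fundamental_Theorem_Algebra"
begin

(* Write w_i = x_i^m for x in the closed polydisc and P(z) = (z - w_1) ... (z - w_n).
   By the unit-disc case of the Gauss-Lucas theorem, P' = n (z - u_1) ... (z - u_(n-1)) with
   every |u_i| <= 1, and comparing coefficients of P' computed in both ways gives
   s_j(u) = ((n - j)/n) s_j(w) = gamma_j theta_j(x) for j < n.  So z |-> (gamma_j z_j)_(j<n) maps
   the closed Theta_n into Gamma_(n-1).  On the operator side, f(gamma_1 T_1, ..., gamma_(n-1) T_(n-1))
   is the polynomial f(gamma_1 z_1, ..., gamma_(n-1) z_(n-1)) evaluated at T, whose norm is
   therefore at most its supremum over Theta_n, which is at most the supremum of |f| over
   Gamma_(n-1). *)

lemma coeff_prod_linear_factors: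
  fixes w :: "nat \<Rightarrow> complex"
  assumes "j \<le> k"
  shows "coeff (\<Prod>i<k. [:-w i, 1:]) j = (-1)^(k-j) * esym k (k-j) w"
proof -
  let ?A = "{..<k}"
  have "(\<Prod>i<k. [:-w i, 1:]) = (\<Prod>i<k. monom 1 1 + [:-w i:])"
    by (intro prod.cong refl) (simp add: monom_altdef)
  also have "\<dots> = (\<Sum>X\<in>Pow ?A. monom (\<Prod>x\<in>?A-X. -w x) (card X))"
    by (subst prod_add) (simp_all add: prod_to_poly monom_power smult_monom mult.commute)
  finally have "coeff (\<Prod>i<k. [:-w i, 1:]) j
      = (\<Sum>X\<in>{X. X \<subseteq> ?A \<and> card X = j}. \<Prod>x\<in>?A-X. -w x)"
    by (simp add: coeff_sum sum.inter_filter[symmetric] Int_def conj_commute)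
  also have "\<dots> = (\<Sum>X\<in>{X. X \<subseteq> ?A \<and> card X = j}. (-1)^(k-j) * (\<Prod>x\<in>?A-X. w x))"
    by (intro sum.cong refl)
       (auto simp: prod_uminus card_Diff_subset finite_subset)
  also have "\<dots> = (-1)^(k-j) * esym k (k-j) w"
    unfolding esym_def sum_distrib_left
    by (rule sum.reindex_bij_witness[where i="\<lambda>X. ?A - X" and j="\<lambda>X. ?A - X"])
       (use assms in \<open>auto simp: card_Diff_subset finite_subset\<close>)
  finally show ?thesis .
qed

lemma Re_div_diff_pos:
  fixes z w :: complex
  assumes "cmod z > 1" "cmod w \<le> 1"
  shows "Re (z / (z - w)) > 0"
proof -
  have "Re z * Re w + Im z * Im w \<le> cmod z * cmod w"
    using norm_cauchy_schwarz[of z w] by (simp add: inner_complex_def)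
  also have "\<dots> < cmod z * cmod z"
    using assms by (intro mult_strict_left_mono) auto
  also have "\<dots> = Re z * Re z + Im z * Im z"
    by (simp add: cmod_def power2_eq_square[symmetric])
  finally have "Re z * Re (z - w) + Im z * Im (z - w) > 0"
    by (simp add: algebra_simps)
  moreover have "z - w \<noteq> 0"
    using assms by auto
  then have "(Re (z - w))\<^sup>2 + (Im (z - w))\<^sup>2 > 0"
    by (simp only: complex_neq_0)
  ultimately show ?thesis
    by (simp add: Re_divide)
qed

lemma pderiv_root_in_unit_disc:
  fixes w :: "nat \<Rightarrow> complex"
  assumes "n \<ge> 1" and w: "\<forall>i<n. cmod (w i) \<le> 1"
    and root: "poly (pderiv (\<Prod>i<n. [:-w i, 1:])) z = 0"
  shows "cmod z \<le> 1"
proof (rule ccontr)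
  assume "\<not> cmod z \<le> 1"
  then have z: "cmod z > 1" by simp
  then have nz: "z - w i \<noteq> 0" if "i < n" for i
    using w that by auto
  define P where "P = (\<Prod>i<n. z - w i)"
  have "P \<noteq> 0"
    using nz by (simp add: P_def)
  have "poly (pderiv (\<Prod>i<n. [:-w i, 1:])) z = (\<Sum>a<n. \<Prod>i\<in>{..<n}-{a}. z - w i)"
    by (simp add: pderiv_prod poly_sum poly_prod pderiv_pCons)
  also have "\<dots> = (\<Sum>a<n. P / (z - w a))"
    using nz by (intro sum.cong refl) (simp add: P_def prod.remove field_simps)
  also have "\<dots> = P * (\<Sum>a<n. 1 / (z - w a))"
    by (simp add: sum_distrib_left)
  finally have "(\<Sum>a<n. 1 / (z - w a)) = 0"
    using root \<open>P \<noteq> 0\<close> by simp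
  moreover have "(\<Sum>a<n. z / (z - w a)) = z * (\<Sum>a<n. 1 / (z - w a))"
    by (simp add: sum_distrib_left)
  ultimately have "(\<Sum>a<n. z / (z - w a)) = 0"
    by simp
  moreover have "(\<Sum>a<n. Re (z / (z - w a))) > 0"
    using assms z by (intro sum_pos Re_div_diff_pos) (auto simp: lessThan_empty_iff)
  ultimately show False
    by (metis Re_sum zero_complex.sel(1) less_irrefl)
qed

lemma pderiv_prod_linear_factors:
  fixes w :: "nat \<Rightarrow> complex"
  assumes "n \<ge> 1"
  obtains u where "pderiv (\<Prod>i<n. [:-w i, 1:]) = smult (of_nat n) (\<Prod>i<n-1. [:-u i, 1:])"
    and "\<forall>i\<ge>n-1. u i = 0"
proof -
  define P where "P = (\<Prod>i<n. [:-w i, 1:])"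
  define Q where "Q = pderiv P"
  have "degree P = n" "lead_coeff P = 1"
    unfolding P_def by (simp add: degree_prod_sum_eq, simp add: lead_coeff_prod)
  then have deg: "degree Q = n - 1" and lc: "lead_coeff Q = of_nat n"
    using assms by (simp_all add: Q_def degree_pderiv coeff_pderiv)
  obtain r where r: "smult (lead_coeff Q) (\<Prod>i<degree Q. [:-r i, 1:]) = Q"
    by (rule complex_poly_decompose')
  define u where "u = (\<lambda>i. if i < n - 1 then r i else 0)"
  have "smult (of_nat n) (\<Prod>i<n-1. [:-r i, 1:]) = Q"
    using r lc by (simp only: deg)
  moreover have "(\<Prod>i<n-1. [:-r i, 1:]) = (\<Prod>i<n-1. [:-u i, 1:])"
    by (intro prod.cong) (auto simp: u_def)
  ultimately have "pderiv (\<Prod>i<n. [:-w i, 1:]) = smult (of_nat n) (\<Prod>i<n-1. [:-u i, 1:])"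
    by (simp add: P_def Q_def)
  moreover have "\<forall>i\<ge>n-1. u i = 0"
    by (simp add: u_def)
  ultimately show ?thesis
    by (rule that)
qed

lemma esym_pderiv_roots:
  fixes w u :: "nat \<Rightarrow> complex"
  assumes Q: "pderiv (\<Prod>i<n. [:-w i, 1:]) = smult (of_nat n) (\<Prod>i<n-1. [:-u i, 1:])"
    and j: "j < n - 1"
  shows "of_nat n * esym (n-1) (Suc j) u = of_nat (n - Suc j) * esym n (Suc j) w"
proof -
  define d where "d = n - 2 - j"
  have "coeff (pderiv (\<Prod>i<n. [:-w i, 1:])) d
      = of_nat (Suc d) * ((-1)^(n - Suc d) * esym n (n - Suc d) w)"
    using j by (simp add: coeff_pderiv coeff_prod_linear_factors d_def)
  moreover have "coeff (smult (of_nat n) (\<Prod>i<n-1. [:-u i, 1:])) d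
      = of_nat n * ((-1)^(n-1-d) * esym (n-1) (n-1-d) u)"
    using j by (simp add: coeff_prod_linear_factors d_def)
  moreover have "n - Suc d = Suc j" "n - 1 - d = Suc j" "Suc d = n - Suc j"
    using j by (auto simp: d_def)
  ultimately show ?thesis
    unfolding Q by simp
qed

lemma scaled_esym_in_Gamma:
  fixes w :: "nat \<Rightarrow> complex"
  assumes "n \<ge> 1" "\<forall>i<n. cmod (w i) \<le> 1"
  shows "\<exists>y\<in>Gamma (n-1). \<forall>j<n-1. y j = of_real (real (n - Suc j) / real n) * esym n (Suc j) w"
proof -
  obtain u where Q: "pderiv (\<Prod>i<n. [:-w i, 1:]) = smult (of_nat n) (\<Prod>i<n-1. [:-u i, 1:])"
    and tail: "\<forall>i\<ge>n-1. u i = 0"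
    using pderiv_prod_linear_factors[OF assms(1)] by blast
  have "cmod (u i) \<le> 1" if "i < n - 1" for i
  proof (rule pderiv_root_in_unit_disc[OF assms])
    show "poly (pderiv (\<Prod>i<n. [:-w i, 1:])) (u i) = 0"
      using that by (simp add: Q poly_prod) (metis lessThan_iff)
  qed
  with tail have "u \<in> closed_polydisc (n-1)"
    by (simp add: closed_polydisc_def)
  moreover have "esym (n-1) (Suc j) u = of_real (real (n - Suc j) / real n) * esym n (Suc j) w"
    if "j < n - 1" for j
    using esym_pderiv_roots[OF Q that] assms(1) by (simp add: field_simps)
  ultimately show ?thesis
    unfolding Gamma_def by (intro bexI[of _ "symmap (n-1) u"]) (auto simp: symmap_def)
qed

lemma Theta_closed_scaled_in_Gamma:
  assumes "n \<ge> 1" "z \<in> Theta_closed m p n"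
  shows "\<exists>y\<in>Gamma (n-1). \<forall>j<n-1. y j = of_real (real (n - Suc j) / real n) * z j"
proof -
  obtain x where x: "x \<in> closed_polydisc n" and z: "z = thetamap m p n x"
    using assms(2) unfolding Theta_closed_def by auto
  have "\<forall>i<n. cmod (x i ^ m) \<le> 1"
    using x by (auto simp: closed_polydisc_def norm_power power_le_one)
  from scaled_esym_in_Gamma[OF assms(1) this] show ?thesis
    by (simp add: z thetamap_def)
qed

lemma norm_esym_le:
  assumes "u \<in> closed_polydisc k"
  shows "cmod (esym k j u) \<le> 2 ^ k"
proof -
  let ?F = "{S. S \<subseteq> {..<k} \<and> card S = j}"
  have "cmod (esym k j u) \<le> (\<Sum>S\<in>?F. cmod (\<Prod>i\<in>S. u i))"
    unfolding esym_def by (rule norm_sum)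
  also have "\<dots> = (\<Sum>S\<in>?F. \<Prod>i\<in>S. cmod (u i))"
    by (simp add: prod_norm)
  also have "\<dots> \<le> (\<Sum>S\<in>?F. 1)"
    using assms by (intro sum_mono prod_le_1) (auto simp: closed_polydisc_def)
  also have "\<dots> \<le> card (Pow {..<k})"
    by (simp, intro card_mono) auto
  finally show ?thesis
    by (simp add: card_Pow)
qed

lemma norm_Gamma_coord_le:
  assumes "y \<in> Gamma k"
  shows "cmod (y i) \<le> 2 ^ k"
  using assms norm_esym_le by (auto simp: Gamma_def symmap_def)

lemma bdd_above_norm_mpeval:
  assumes "\<forall>z\<in>K. \<forall>i<k. cmod (z i) \<le> B"
  shows "bdd_above ((\<lambda>z. cmod (mpeval k c z)) ` K)"
proof (rule bdd_aboveI2)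
  fix z assume "z \<in> K"
  have "cmod (mpeval k c z) \<le> (\<Sum>\<alpha>\<in>{\<alpha>. c \<alpha> \<noteq> 0}. cmod (c \<alpha> * (\<Prod>i<k. z i ^ \<alpha> i)))"
    unfolding mpeval_def by (rule norm_sum)
  also have "\<dots> = (\<Sum>\<alpha>\<in>{\<alpha>. c \<alpha> \<noteq> 0}. cmod (c \<alpha>) * (\<Prod>i<k. cmod (z i) ^ \<alpha> i))"
    by (simp add: norm_mult prod_norm[symmetric] norm_power)
  also have "\<dots> \<le> (\<Sum>\<alpha>\<in>{\<alpha>. c \<alpha> \<noteq> 0}. cmod (c \<alpha>) * (\<Prod>i<k. B ^ \<alpha> i))"
    using assms \<open>z \<in> K\<close>
    by (intro sum_mono mult_left_mono prod_mono conjI power_mono) auto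
  finally show "cmod (mpeval k c z) \<le> (\<Sum>\<alpha>\<in>{\<alpha>. c \<alpha> \<noteq> 0}. cmod (c \<alpha>) * (\<Prod>i<k. B ^ \<alpha> i))" .
qed

lemma mpoly_extend_vars: "mpoly k c \<Longrightarrow> k \<le> n \<Longrightarrow> mpoly n c"
  by (auto simp: mpoly_def)

lemma mpeval_cong: "(\<And>i. i < k \<Longrightarrow> z i = z' i) \<Longrightarrow> mpeval k c z = mpeval k c z'"
  by (simp add: mpeval_def)

lemma mpeval_extend_vars:
  assumes "mpoly k c" "k \<le> n"
  shows "mpeval n c z = mpeval k c z"
  unfolding mpeval_def
proof (intro sum.cong refl)
  fix \<alpha> assume "\<alpha> \<in> {\<alpha>. c \<alpha> \<noteq> 0}"
  then have "\<forall>i\<in>{..<n} - {..<k}. z i ^ \<alpha> i = 1"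
    using assms(1) by (auto simp: mpoly_def)
  then show "c \<alpha> * (\<Prod>i<n. z i ^ \<alpha> i) = c \<alpha> * (\<Prod>i<k. z i ^ \<alpha> i)"
    using assms(2) by (simp add: prod.mono_neutral_right)
qed

lemma foldr_comp_eq_comp: "foldr (\<lambda>i. (\<circ>) (h i)) xs g = foldr (\<lambda>i. (\<circ>) (h i)) xs id \<circ> g"
  by (induction xs) (auto simp: o_assoc)

lemma opmono_0 [simp]: "opmono 0 T \<alpha> = id"
  by (simp add: opmono_def)

lemma opmono_Suc: "opmono (Suc k) T \<alpha> = opmono k T \<alpha> \<circ> (T k ^^ \<alpha> k)"
  unfolding opmono_def by (simp add: foldr_comp_eq_comp[of _ _ "T k ^^ \<alpha> k"])

lemma opmono_extend_vars:
  assumes "k \<le> n" "\<forall>i. k \<le> i \<and> i < n \<longrightarrow> \<alpha> i = 0"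
  shows "opmono n T \<alpha> = opmono k T \<alpha>"
  using assms by (induction n rule: dec_induct) (auto simp: opmono_Suc)

lemma opeval_extend_vars:
  assumes "mpoly k c" "k \<le> n"
  shows "opeval J n c T = opeval J k c T"
  using assms unfolding opeval_def mpoly_def
  by (intro ext sum.cong refl arg_cong[where f="cscale J _"] fun_cong[OF opmono_extend_vars]) auto

definition mpoly_rescale ::
    "nat \<Rightarrow> (nat \<Rightarrow> real) \<Rightarrow> ((nat \<Rightarrow> nat) \<Rightarrow> complex) \<Rightarrow> (nat \<Rightarrow> nat) \<Rightarrow> complex" where
  "mpoly_rescale k g c = (\<lambda>\<alpha>. c \<alpha> * of_real (\<Prod>i<k. g i ^ \<alpha> i))"

lemma mpoly_rescale_eq_0_iff:
  "\<forall>i<k. g i \<noteq> 0 \<Longrightarrow> mpoly_rescale k g c \<alpha> = 0 \<longleftrightarrow> c \<alpha> = 0"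
  by (simp add: mpoly_rescale_def)

lemma mpoly_mpoly_rescale: "mpoly k c \<Longrightarrow> \<forall>i<k. g i \<noteq> 0 \<Longrightarrow> mpoly k (mpoly_rescale k g c)"
  by (simp add: mpoly_def mpoly_rescale_eq_0_iff)

lemma mpeval_mpoly_rescale:
  assumes "\<forall>i<k. g i \<noteq> 0"
  shows "mpeval k (mpoly_rescale k g c) z = mpeval k c (\<lambda>i. of_real (g i) * z i)"
  unfolding mpeval_def mpoly_rescale_eq_0_iff[OF assms]
  by (simp add: mpoly_rescale_def power_mult_distrib prod.distrib mult.assoc)

lemma linear_funpow:
  fixes f :: "'a::real_vector \<Rightarrow> 'a"
  shows "linear f \<Longrightarrow> linear (f ^^ a)"
  by (induction a) (auto intro: linear_compose linear_id)

lemma linear_opmono: "\<forall>i<k. linear (T i) \<Longrightarrow> linear (opmono k T \<alpha>)"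
  by (induction k) (auto simp: opmono_Suc intro: linear_compose linear_id linear_funpow)

lemma funpow_scaleR:
  fixes f :: "'a::real_vector \<Rightarrow> 'a"
  assumes "linear f"
  shows "((\<lambda>x. r *\<^sub>R f x) ^^ a) x = (r ^ a) *\<^sub>R (f ^^ a) x"
  by (induction a) (auto simp: linear.scaleR[OF assms] linear_funpow)

lemma opmono_scaleR:
  assumes "\<forall>i<k. linear (T i)"
  shows "opmono k (\<lambda>i x. g i *\<^sub>R T i x) \<alpha> x = (\<Prod>i<k. g i ^ \<alpha> i) *\<^sub>R opmono k T \<alpha> x"
  using assms
proof (induction k arbitrary: x)
  case (Suc k)
  have "linear (opmono k T \<alpha>)"
    using Suc.prems by (intro linear_opmono) auto
  with Suc show ?case
    by (simp add: opmono_Suc funpow_scaleR linear.scaleR)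
qed simp

lemma cscale_mult_of_real: "linear J \<Longrightarrow> cscale J (c * of_real r) x = cscale J c (r *\<^sub>R x)"
  by (simp add: cscale_def linear.scaleR)

lemma opeval_mpoly_rescale:
  assumes "linear J" "\<forall>i<k. linear (T i)" "\<forall>i<k. g i \<noteq> 0"
  shows "opeval J k (mpoly_rescale k g c) T = opeval J k c (\<lambda>i x. g i *\<^sub>R T i x)"
  unfolding opeval_def mpoly_rescale_eq_0_iff[OF assms(3)]
  by (intro ext sum.cong refl)
     (simp only: mpoly_rescale_def cscale_mult_of_real[OF assms(1)] opmono_scaleR[OF assms(2)])

lemma bounded_op_scaleR:
  assumes "linear J" "bounded_op J S"
  shows "bounded_op J (\<lambda>x. r *\<^sub>R S x)"
proof -
  have "S (J x) = J (S x)" for x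
    using assms(2) unfolding bounded_op_def by (metis comp_apply)
  then show ?thesis
    using assms unfolding bounded_op_def
    by (simp add: bounded_linear_const_scaleR fun_eq_iff linear.scaleR)
qed

lemma commuting_tuple_scaleR:
  assumes "commuting_tuple n T" "k \<le> n" "\<forall>i<k. linear (T i)"
  shows "commuting_tuple k (\<lambda>i x. g i *\<^sub>R T i x)"
  unfolding commuting_tuple_def
proof (intro allI impI ext)
  fix i j x assume "i < k" "j < k"
  moreover have "T i (T j x) = T j (T i x)"
    using assms(1,2) \<open>i < k\<close> \<open>j < k\<close> unfolding commuting_tuple_def
    by (metis comp_apply order_less_le_trans)
  ultimately show "((\<lambda>x. g i *\<^sub>R T i x) \<circ> (\<lambda>x. g j *\<^sub>R T j x)) x
      = ((\<lambda>x. g j *\<^sub>R T j x) \<circ> (\<lambda>x. g i *\<^sub>R T i x)) x"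
    using assms(3) by (simp add: linear.scaleR)
qed

lemma SUP_mpeval_mpoly_rescale_le:
  assumes c: "mpoly k c" and "k \<le> n" "K \<noteq> {}"
    and g: "\<forall>i<k. g i \<noteq> 0"
    and KL: "\<forall>z\<in>K. \<exists>y\<in>L. \<forall>i<k. y i = of_real (g i) * z i"
    and L: "\<forall>y\<in>L. \<forall>i<k. cmod (y i) \<le> B"
  shows "(SUP z\<in>K. cmod (mpeval n (mpoly_rescale k g c) z)) \<le> (SUP y\<in>L. cmod (mpeval k c y))"
proof (rule cSUP_mono)
  show "bdd_above ((\<lambda>y. cmod (mpeval k c y)) ` L)"
    using L by (rule bdd_above_norm_mpeval)
next
  fix z assume "z \<in> K"
  then obtain y where "y \<in> L" and y: "\<forall>i<k. y i = of_real (g i) * z i"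
    using KL by blast
  have "mpoly k (mpoly_rescale k g c)"
    using c g by (rule mpoly_mpoly_rescale)
  then have "mpeval n (mpoly_rescale k g c) z = mpeval k (mpoly_rescale k g c) z"
    using \<open>k \<le> n\<close> by (rule mpeval_extend_vars)
  also have "\<dots> = mpeval k c (\<lambda>i. of_real (g i) * z i)"
    using g by (rule mpeval_mpoly_rescale)
  also have "\<dots> = mpeval k c y"
    using y by (intro mpeval_cong) simp
  finally show "\<exists>y\<in>L. cmod (mpeval n (mpoly_rescale k g c) z) \<le> cmod (mpeval k c y)"
    using \<open>y \<in> L\<close> by auto
qed fact

lemma K_contraction_rescale_truncate:
  assumes T: "K_contraction J K n T" and "linear J" "k \<le> n" "K \<noteq> {}"
    and g: "\<forall>i<k. g i \<noteq> 0"
    and "\<forall>z\<in>K. \<exists>y\<in>L. \<forall>i<k. y i = of_real (g i) * z i"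
    and "\<forall>y\<in>L. \<forall>i<k. cmod (y i) \<le> B"
  shows "K_contraction J L k (\<lambda>i x. g i *\<^sub>R T i x)"
proof -
  have bounded: "\<forall>i<n. bounded_op J (T i)" and comm: "commuting_tuple n T"
    and norm_le: "\<And>c. mpoly n c \<Longrightarrow> onorm (opeval J n c T) \<le> (SUP z\<in>K. cmod (mpeval n c z))"
    using T by (auto simp: K_contraction_def)
  have lin: "\<forall>i<k. linear (T i)"
    using bounded \<open>k \<le> n\<close> by (auto simp: bounded_op_def bounded_linear.linear)
  have "onorm (opeval J k c (\<lambda>i x. g i *\<^sub>R T i x)) \<le> (SUP y\<in>L. cmod (mpeval k c y))"
    if c: "mpoly k c" for c
  proof -
    define c' where "c' = mpoly_rescale k g c"
    have "mpoly k c'"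
      using c g by (simp add: c'_def mpoly_mpoly_rescale)
    have "opeval J k c (\<lambda>i x. g i *\<^sub>R T i x) = opeval J k c' T"
      unfolding c'_def using \<open>linear J\<close> lin g by (rule opeval_mpoly_rescale[symmetric])
    also have "\<dots> = opeval J n c' T"
      using \<open>mpoly k c'\<close> \<open>k \<le> n\<close> by (rule opeval_extend_vars[symmetric])
    finally have "onorm (opeval J k c (\<lambda>i x. g i *\<^sub>R T i x)) \<le> (SUP z\<in>K. cmod (mpeval n c' z))"
      using norm_le \<open>mpoly k c'\<close> \<open>k \<le> n\<close> by (simp add: mpoly_extend_vars)
    also have "\<dots> \<le> (SUP y\<in>L. cmod (mpeval k c y))"
      unfolding c'_def using c assms(3-) by (rule SUP_mpeval_mpoly_rescale_le)
    finally show ?thesis .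
  qed
  moreover have "\<forall>i<k. bounded_op J (\<lambda>x. g i *\<^sub>R T i x)"
    using bounded \<open>linear J\<close> \<open>k \<le> n\<close> by (simp add: bounded_op_scaleR)
  ultimately show ?thesis
    using commuting_tuple_scaleR[OF comm \<open>k \<le> n\<close> lin] by (simp add: K_contraction_def)
qed

theorem lemma2p7:
  fixes m p n :: nat and J :: "'h::{real_inner,complete_space} \<Rightarrow> 'h" and T :: "nat \<Rightarrow> 'h \<Rightarrow> 'h"
  assumes "m > 0" "p > 0" "p dvd m" "n > 1"
    and "complex_structure J"
    and "Theta_contraction J m p n T"
  shows "Gamma_contraction J (n - 1) (\<lambda>i x. (real (n - Suc i) / real n) *\<^sub>R T i x)"
  unfolding Gamma_contraction_def
proof (rule K_contraction_rescale_truncate)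
  \<comment> \<open>Only the first n - 1 coordinates of theta enter.\<close>
  show "K_contraction J (Theta_closed m p n) n T"
    using assms(6) by (simp add: Theta_contraction_def)
  show "linear J"
    using assms(5) by (simp add: complex_structure_def)
  show "Theta_closed m p n \<noteq> {}"
    unfolding Theta_closed_def closed_polydisc_def by (auto intro!: exI[of _ "\<lambda>_. 0"])
  show "\<forall>z\<in>Theta_closed m p n. \<exists>y\<in>Gamma (n - 1). \<forall>i<n - 1.
          y i = of_real (real (n - Suc i) / real n) * z i"
    using assms(4) Theta_closed_scaled_in_Gamma[of n] by simp
  show "\<forall>y\<in>Gamma (n - 1). \<forall>i<n - 1. cmod (y i) \<le> 2 ^ (n - 1)"
    by (auto intro: norm_Gamma_coord_le)
qed auto

end
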